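(* For each positive integer $n$, \[ p^{(2)}(n) = \frac{1}{2}\Bigl\{ \sum_{j=1}^{n-1} d(j)\, d(n-j) + d(n) - \sigma(n)\Bigr\}. \]
   Context: $p^{(2)}(n)$ is the number of partitions of $n$ having exactly two distinct part sizes; $d(n)$ is the number of positive divisors of $n$; $\sigma(n) = \sum_{d \mid n} d$. *)

theory Defs
  imports Complex_Main "HOL-Library.Multiset"
begin

definition partitions :: "nat \<Rightarrow> nat multiset set" where
  "partitions n = {M. (\<forall>x\<in>#M. x > 0) \<and> sum_mset M = n}"

definition p2 :: "nat \<Rightarrow> nat" where
  "p2 n = card {M \<in> partitions n. card (set_mset M) = 2}"

definition ndiv :: "nat \<Rightarrow> nat" where
  "ndiv n = card {d. d dvd n \<and> d > 0}"

definition sigma :: "nat \<Rightarrow> nat" where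
  "sigma n = (\<Sum>d\<in>{d. d dvd n \<and> d > 0}. d)"

end

theory Submission
  imports Defs
begin

text \<open>Count the quadruples (a, m, b, k) of positive integers with a m + b k = n in three ways.
Grouping them by j = a m gives the convolution sum of d(j) d(n - j).
Those with a = b are a divisor a of n together with a composition of n/a into two positive
parts, so there are \<sigma>(n) - d(n) of them. Swapping (a, m) with (b, k) matches those with
a < b against those with a > b, and the quadruples with a < b are exactly the partitions
with m parts a and k parts b, i.e. the partitions with two distinct part sizes.\<close>

definition two_term_reps :: "nat \<Rightarrow> (nat \<times> nat \<times> nat \<times> nat) set" where
  "two_term_reps n = {(a, m, b, k). 0 < a \<and> 0 < m \<and> 0 < b \<and> 0 < k \<and> a * m + b * k = n}"

lemma finite_divisors: "0 < n \<Longrightarrow> finite {d::nat. d dvd n \<and> d > 0}"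
  by (rule finite_subset[of _ "{..n}"]) (auto dest: dvd_imp_le)

lemma card_factor_pairs:
  assumes "0 < n"
  shows "card {(a, m). a * m = n} = ndiv n"
proof -
  have "{(a, m). a * m = n} = (\<lambda>d. (d, n div d)) ` {d. d dvd n \<and> d > 0}"
    using assms by (auto simp: image_iff)
  moreover have "inj_on (\<lambda>d. (d, n div d)) {d. d dvd n \<and> d > 0}"
    by (auto simp: inj_on_def)
  ultimately show ?thesis
    by (simp add: card_image ndiv_def)
qed

lemma finite_factor_pairs: "0 < n \<Longrightarrow> finite {(a, m). a * m = (n::nat)}"
  by (rule finite_subset[of _ "{..n} \<times> {..n}"])
     (auto intro: dvd_imp_le dvd_triv_left dvd_triv_right)

lemma compositions2_eq_image:
  "{(m, k). 0 < m \<and> 0 < k \<and> m + k = s} = (\<lambda>m. (m, s - m)) ` {1..<s::nat}"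
  by (auto simp: image_iff)

lemma finite_compositions2: "finite {(m, k). 0 < m \<and> 0 < k \<and> m + k = (s::nat)}"
  by (simp add: compositions2_eq_image)

lemma card_compositions2: "card {(m, k). 0 < m \<and> 0 < k \<and> m + k = s} = (s::nat) - 1"
proof -
  have "inj_on (\<lambda>m. (m, s - m)) {1..<s}"
    by (auto simp: inj_on_def)
  then show ?thesis
    by (simp add: compositions2_eq_image card_image)
qed

lemma sum_complementary_divisors:
  assumes "0 < n"
  shows "(\<Sum>d\<in>{d. d dvd n \<and> d > 0}. n div d) = sigma n"
  unfolding sigma_def
  by (rule sum.reindex_bij_witness[where i = "\<lambda>d. n div d" and j = "\<lambda>d. n div d"])
     (use assms in \<open>auto simp: dvd_div_eq_0_iff intro: dvd_div_mult_self\<close>)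

lemma finite_two_term_reps: "finite (two_term_reps n)"
proof (rule finite_subset)
  show "two_term_reps n \<subseteq> {..n} \<times> {..n} \<times> {..n} \<times> {..n}"
  proof
    fix q assume "q \<in> two_term_reps n"
    then obtain a m b k where q: "q = (a, m, b, k)" "0 < a" "0 < m" "0 < b" "0 < k"
        "a * m + b * k = n"
      by (auto simp: two_term_reps_def)
    have "a \<le> a * m" "m \<le> a * m" "b \<le> b * k" "k \<le> b * k"
      using q by auto
    then have "a \<le> n" "m \<le> n" "b \<le> n" "k \<le> n"
      using q(6) by linarith+
    with q show "q \<in> {..n} \<times> {..n} \<times> {..n} \<times> {..n}"
      by auto
  qed
qed simp

lemma card_two_term_reps:
  "card (two_term_reps n) = (\<Sum>j=1..n-1. ndiv j * ndiv (n - j))"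
proof -
  let ?S = "SIGMA j:{1..n-1}. {(a, m). a * m = j} \<times> {(b, k). b * k = n - j}"
  let ?f = "\<lambda>(j::nat, (a::nat, m::nat), (b::nat, k::nat)). (a, m, b, k)"
  have "inj_on ?f ?S"
    by (auto simp: inj_on_def)
  moreover have "?f ` ?S = two_term_reps n"
  proof (intro equalityI subsetI)
    fix q assume "q \<in> ?f ` ?S"
    then obtain j a m b k where q: "q = (a, m, b, k)" "j \<in> {1..n-1}" "a * m = j" "b * k = n - j"
      by fastforce
    have "0 < n - j"
      using q(2) by auto
    then have "0 < b * k"
      using q(4) by simp
    then have "0 < b" "0 < k"
      by simp_all
    with q show "q \<in> two_term_reps n"
      by (auto simp: two_term_reps_def)
  next
    fix q assume "q \<in> two_term_reps n"
    then obtain a m b k where q: "q = (a, m, b, k)" "0 < a * m" "0 < b * k" "a * m + b * k = n"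
      by (auto simp: two_term_reps_def)
    then have "a * m \<in> {1..n-1}"
      unfolding atLeastAtMost_iff by linarith
    then have "(a * m, (a, m), (b, k)) \<in> ?S"
      using q(4) by auto
    then show "q \<in> ?f ` ?S"
      by (rule rev_image_eqI) (simp add: q(1))
  qed
  ultimately have "card (two_term_reps n) = card ?S"
    using card_image by fastforce
  also have "\<dots> = (\<Sum>j=1..n-1. card {(a, m). a * m = j} * card {(b, k). b * k = n - j})"
    by (subst card_SigmaI) (auto intro!: finite_cartesian_product finite_factor_pairs
        simp: card_cartesian_product)
  also have "\<dots> = (\<Sum>j=1..n-1. ndiv j * ndiv (n - j))"
    by (rule sum.cong) (auto simp: card_factor_pairs)
  finally show ?thesis .
qed

lemma card_two_term_reps_equal_parts:
  assumes "0 < n"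
  shows "card {(a, m, b, k) \<in> two_term_reps n. a = b} + ndiv n = sigma n"
proof -
  let ?D = "{d. d dvd n \<and> d > 0}"
  let ?S = "SIGMA d:?D. {(m, k). 0 < m \<and> 0 < k \<and> m + k = n div d}"
  let ?f = "\<lambda>(d::nat, (m::nat, k::nat)). (d, m, d, k)"
  have "inj_on ?f ?S"
    by (auto simp: inj_on_def)
  moreover have "?f ` ?S = {(a, m, b, k) \<in> two_term_reps n. a = b}"
  proof (intro equalityI subsetI)
    fix q assume "q \<in> ?f ` ?S"
    then obtain d m k where "q = (d, m, d, k)" "d dvd n" "0 < d" "0 < m" "0 < k"
        "m + k = n div d"
      by fastforce
    then show "q \<in> {(a, m, b, k) \<in> two_term_reps n. a = b}"
      by (auto simp: two_term_reps_def distrib_left[symmetric])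
  next
    fix q assume "q \<in> {(a, m, b, k) \<in> two_term_reps n. a = b}"
    then obtain d m k where q: "q = (d, m, d, k)" "0 < d" "0 < m" "0 < k" "n = d * (m + k)"
      by (auto simp: two_term_reps_def distrib_left)
    then have "(d, (m, k)) \<in> ?S"
      by auto
    then show "q \<in> ?f ` ?S"
      by (rule rev_image_eqI) (simp add: q(1))
  qed
  ultimately have "card {(a, m, b, k) \<in> two_term_reps n. a = b} = card ?S"
    using card_image by fastforce
  also have "\<dots> = (\<Sum>d\<in>?D. n div d - 1)"
    using finite_divisors[OF assms]
    by (subst card_SigmaI) (auto simp: card_compositions2 finite_compositions2)
  finally have "card {(a, m, b, k) \<in> two_term_reps n. a = b} + ndiv n = (\<Sum>d\<in>?D. n div d - 1 + 1)"
    by (simp only: ndiv_def card_eq_sum sum.distrib)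
  also have "\<dots> = (\<Sum>d\<in>?D. n div d)"
    using assms by (intro sum.cong) (auto simp: dvd_div_eq_0_iff)
  finally show ?thesis
    using sum_complementary_divisors[OF assms] by simp
qed

lemma two_term_reps_swap_iff:
  "(a, m, b, k) \<in> two_term_reps n \<longleftrightarrow> (b, k, a, m) \<in> two_term_reps n"
  by (auto simp: two_term_reps_def)

lemma card_two_term_reps_by_order:
  "card (two_term_reps n) =
     card {(a, m, b, k) \<in> two_term_reps n. a = b} + 2 * card {(a, m, b, k) \<in> two_term_reps n. a < b}"
proof -
  let ?R = "two_term_reps n"
  let ?E = "{(a, m, b, k) \<in> ?R. a = b}"
  let ?Lt = "{(a, m, b, k) \<in> ?R. a < b}"
  let ?Gt = "{(a, m, b, k) \<in> ?R. b < a}"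
  let ?swap = "\<lambda>(a::nat, m::nat, b::nat, k::nat). (b, k, a, m)"
  have swap_image: "?Gt = ?swap ` ?Lt"
  proof (intro equalityI subsetI)
    fix q assume "q \<in> ?Gt"
    then show "q \<in> ?swap ` ?Lt"
      by (cases q) (force simp: two_term_reps_swap_iff)
  qed (auto simp: two_term_reps_swap_iff)
  have "inj_on ?swap ?Lt"
    by (rule inj_onI) auto
  then have card_swap: "card ?Gt = card ?Lt"
    unfolding swap_image by (rule card_image)
  have fin: "finite ?E" "finite ?Lt" "finite ?Gt"
    by (rule finite_subset[OF _ finite_two_term_reps], blast)+
  have "?R = ?E \<union> ?Lt \<union> ?Gt"
    by auto
  then have "card ?R = card (?E \<union> ?Lt \<union> ?Gt)"
    by (rule arg_cong)
  also have "\<dots> = card ?E + card ?Lt + card ?Gt"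
    using fin by (subst card_Un_disjoint; auto)+
  finally show ?thesis
    using card_swap by simp
qed

lemma multiset_of_two_values:
  assumes "set_mset M = {a, b}" "a \<noteq> b"
  shows "M = replicate_mset (count M a) a + replicate_mset (count M b) b"
proof (rule multiset_eqI)
  fix x
  show "count M x = count (replicate_mset (count M a) a + replicate_mset (count M b) b) x"
    using assms by (cases "x \<in># M") (auto simp: count_eq_zero_iff)
qed

lemma card_two_term_reps_less:
  "card {(a, m, b, k) \<in> two_term_reps n. a < b} = p2 n"
proof -
  let ?L = "{(a, m, b, k) \<in> two_term_reps n. a < b}"
  let ?P = "{M \<in> partitions n. card (set_mset M) = 2}"
  let ?g = "\<lambda>(a::nat, m::nat, b::nat, k::nat). replicate_mset m a + replicate_mset k b"
  let ?h = "\<lambda>M. (Min (set_mset M), count M (Min (set_mset M)),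
                  Max (set_mset M), count M (Max (set_mset M)))"
  have set_g: "set_mset (?g (a, m, b, k)) = {a, b}" if "(a, m, b, k) \<in> ?L" for a m b k
    using that by (auto simp: two_term_reps_def)
  have "?h (?g q) = q" if "q \<in> ?L" for q
  proof -
    obtain a m b k where q: "q = (a, m, b, k)" "(a, m, b, k) \<in> ?L"
      using \<open>q \<in> ?L\<close> by (cases q) auto
    then have "a < b"
      by simp
    then show ?thesis
      using set_g[OF q(2)] by (simp add: q(1))
  qed
  then have inj: "inj_on ?g ?L"
    by (rule inj_on_inverseI)
  have image: "?g ` ?L = ?P"
  proof (intro equalityI subsetI)
    fix M assume "M \<in> ?g ` ?L"
    then obtain a m b k where q: "(a, m, b, k) \<in> ?L" and M: "M = ?g (a, m, b, k)"
      by auto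
    then show "M \<in> ?P"
      using set_g[OF q] by (auto simp: partitions_def two_term_reps_def mult.commute)
  next
    fix M assume M: "M \<in> ?P"
    then obtain x y where xy: "set_mset M = {x, y}" "x \<noteq> y"
      by (auto simp: card_2_iff)
    define a where "a = min x y"
    define b where "b = max x y"
    have ab: "set_mset M = {a, b}" "a < b"
      using xy by (auto simp: a_def b_def min_def max_def)
    have pos: "0 < a" "0 < b"
      using M ab(1) by (auto simp: partitions_def)
    have M_eq: "M = replicate_mset (count M a) a + replicate_mset (count M b) b"
      using multiset_of_two_values[OF ab(1)] ab(2) by blast
    have "sum_mset M = n"
      using M by (simp add: partitions_def)
    then have "a * count M a + b * count M b = n"
      by (subst (asm) M_eq) (simp add: mult.commute)
    then have "(a, count M a, b, count M b) \<in> ?L"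
      using pos ab by (auto simp: two_term_reps_def)
    then show "M \<in> ?g ` ?L"
      by (rule rev_image_eqI) (simp only: prod.case, rule M_eq)
  qed
  show ?thesis
    unfolding p2_def image[symmetric] by (rule card_image[OF inj, symmetric])
qed

theorem corollary2p5:
  fixes n :: nat
  assumes "n > 0"
  shows "real (p2 n) =
    (1/2) * (real (\<Sum>j=1..n-1. ndiv j * ndiv (n - j)) + real (ndiv n) - real (sigma n))"
proof -
  have "(\<Sum>j=1..n-1. ndiv j * ndiv (n - j)) + ndiv n = sigma n + 2 * p2 n"
    using card_two_term_reps[of n] card_two_term_reps_by_order[of n]
      card_two_term_reps_less[of n] card_two_term_reps_equal_parts[OF assms]
    by linarith
  then have "real (\<Sum>j=1..n-1. ndiv j * ndiv (n - j)) + real (ndiv n) = real (sigma n) + 2 * real (p2 n)"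
    by (metis of_nat_add of_nat_mult of_nat_numeral)
  then show ?thesis
    by simp
qed

end
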